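(* Let $F\subset\mathrm{Sym}^2(\mathbb{R}^n)$ be a cone subequation invariant under a subgroup of $\mathrm{O}(n)$ acting transitively on $S^{n-1}$, with Riesz characteristic $p_F=p$, where $1\le p<\infty$ and $p\neq2$. Suppose $g:S^{n-1}\to[-\infty,\infty)$ is such that $u(x)\equiv\frac{1}{|x|^{p-2}}g\big(\frac{x}{|x|}\big)$ is $F$-subharmonic on $\mathbb{R}^n$ across $0$, and let $\Theta\equiv\Theta^M(u,0)$. Then: (1) $g$ is $F_{S^{n-1}}$-subharmonic on $S^{n-1}$; (2) if $2<p<\infty$, then $\sup_{S^{n-1}}g=-\Theta\le0$; (3) if $1\le p<2$, then $\sup_{S^{n-1}}g=\Theta\ge0$.
   Context: A cone subequation is a closed $F\subset\mathrm{Sym}^2(\mathbb{R}^n)$, $\emptyset\ne F\ne\mathrm{Sym}^2(\mathbb{R}^n)$, with $F+\{A\ge0\}\subset F$ and $tF\subset F$ for $t\ge0$. Its Riesz characteristic is $p_F=\sup\{t: P_{e^\perp}-(t-1)P_e\in F\}$ for a (any) unit vector $e$, where $P_e,P_{e^\perp}$ are orthogonal projections onto $\mathbb{R}e$ and $e^\perp$. $F$-subharmonic: upper semicontinuous $u$ such that for every $x$ and every $C^2$ $\varphi$ with $u\le\varphi$ near $x$, $u(x)=\varphi(x)$, one has $D^2\varphi(x)\in F$. Riesz kernel: $K_p(t)=t^{2-p}$ for $1\le p<2$, $K_p(t)=-t^{2-p}$ for $p>2$. With $M(u,r)=\sup_{|x|\le r}u$, $\Theta^M(u,0)=\lim_{r<s\downarrow0}\frac{M(u,r)-M(u,s)}{K_p(r)-K_p(s)}$.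 $F_{S^{n-1}}=\Phi^{-1}(F)$, where $\Phi$ maps a Riemannian $2$-jet $(r,q,H)$ at $\sigma\in S^{n-1}$ to $H-(p-2)rP_{\sigma^\perp}-(p-1)(\sigma q^t+q\sigma^t)+(p-2)(p-1)rP_\sigma$ ($q\in T_\sigma S^{n-1}\subset\mathbb{R}^n$, $H$ extended by zero on $\mathbb{R}\sigma$); $g$ is $F_{S^{n-1}}$-subharmonic if it is upper semicontinuous and for every $\sigma$ and $C^2$ $\psi$ with $g\le\psi$ near $\sigma$, $g(\sigma)=\psi(\sigma)$, the jet $(\psi(\sigma),D_\sigma\psi,\mathrm{Hess}_\sigma\psi)\in F_{S^{n-1}}$. *)

theory Defs
  imports "HOL-Analysis.Analysis" "HOL-Library.Extended_Real"
begin

definition sym_mat :: "real^'n^'n \<Rightarrow> bool" where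
  "sym_mat A \<longleftrightarrow> transpose A = A"

definition psd_mat :: "real^'n^'n \<Rightarrow> bool" where
  "psd_mat A \<longleftrightarrow> sym_mat A \<and> (\<forall>v. 0 \<le> v \<bullet> (A *v v))"

definition outer :: "real^'n \<Rightarrow> real^'n \<Rightarrow> real^'n^'n" where
  "outer a b = (\<chi> i j. a $ i * b $ j)"

text \<open>Orthogonal projections onto R e and onto e-perp (e a unit vector).\<close>
definition proj_line :: "real^'n \<Rightarrow> real^'n^'n" where
  "proj_line e = outer e e"

definition proj_perp :: "real^'n \<Rightarrow> real^'n^'n" where
  "proj_perp e = mat 1 - proj_line e"

definition cone_subequation :: "(real^'n^'n) set \<Rightarrow> bool" where
  "cone_subequation F \<longleftrightarrow>
     F \<subseteq> {A. sym_mat A} \<and> closed F \<and> F \<noteq> {} \<and> F \<noteq> {A. sym_mat A} \<and>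
     (\<forall>A\<in>F. \<forall>P. psd_mat P \<longrightarrow> A + P \<in> F) \<and>
     (\<forall>A\<in>F. \<forall>t::real. 0 \<le> t \<longrightarrow> t *\<^sub>R A \<in> F)"

definition transitive_orth_subgroup :: "(real^'n^'n) set \<Rightarrow> bool" where
  "transitive_orth_subgroup G \<longleftrightarrow>
     (\<forall>g\<in>G. orthogonal_matrix g) \<and> mat 1 \<in> G \<and>
     (\<forall>g\<in>G. \<forall>h\<in>G. g ** h \<in> G) \<and> (\<forall>g\<in>G. transpose g \<in> G) \<and>
     (\<forall>\<sigma> \<tau>. norm \<sigma> = 1 \<longrightarrow> norm \<tau> = 1 \<longrightarrow> (\<exists>g\<in>G. g *v \<sigma> = \<tau>))"

definition invariant_under :: "(real^'n^'n) set \<Rightarrow> (real^'n^'n) set \<Rightarrow> bool" where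
  "invariant_under G F \<longleftrightarrow> (\<forall>g\<in>G. \<forall>A\<in>F. g ** A ** transpose g \<in> F)"

definition riesz_char :: "(real^'n^'n) set \<Rightarrow> real^'n \<Rightarrow> ereal" where
  "riesz_char F e = Sup (ereal ` {t. proj_perp e - (t - 1) *\<^sub>R proj_line e \<in> F})"

definition usc_on :: "'a::topological_space set \<Rightarrow> ('a \<Rightarrow> ereal) \<Rightarrow> bool" where
  "usc_on S f \<longleftrightarrow> (\<forall>x\<in>S. \<forall>c. f x < c \<longrightarrow> eventually (\<lambda>y. f y < c) (at x within S))"

definition C2_with :: "(real^'n) set \<Rightarrow> (real^'n \<Rightarrow> real) \<Rightarrow> (real^'n \<Rightarrow> real^'n)
    \<Rightarrow> (real^'n \<Rightarrow> real^'n^'n) \<Rightarrow> bool" where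
  "C2_with U \<phi> D1 D2 \<longleftrightarrow>
     (\<forall>x\<in>U. (\<phi> has_derivative (\<lambda>h. D1 x \<bullet> h)) (at x)) \<and>
     (\<forall>x\<in>U. (D1 has_derivative (\<lambda>h. D2 x *v h)) (at x)) \<and>
     continuous_on U D2"

definition F_subharmonic :: "(real^'n^'n) set \<Rightarrow> (real^'n \<Rightarrow> ereal) \<Rightarrow> bool" where
  "F_subharmonic F u \<longleftrightarrow>
     (\<forall>x. u x < \<infinity>) \<and> usc_on UNIV u \<and>
     (\<forall>x U \<phi> D1 D2. open U \<and> x \<in> U \<and> C2_with U \<phi> D1 D2 \<and>
        (\<forall>y\<in>U. u y \<le> ereal (\<phi> y)) \<and> u x = ereal (\<phi> x) \<longrightarrow> D2 x \<in> F)"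

text \<open>The map Phi from Riemannian 2-jets (r,q,H) at sigma on the sphere to Sym^2(R^n).\<close>
definition Phi_jet :: "real \<Rightarrow> real^'n \<Rightarrow> real \<Rightarrow> real^'n \<Rightarrow> real^'n^'n \<Rightarrow> real^'n^'n" where
  "Phi_jet p \<sigma> r q H =
     H - ((p - 2) * r) *\<^sub>R proj_perp \<sigma> - (p - 1) *\<^sub>R (outer \<sigma> q + outer q \<sigma>)
       + ((p - 2) * (p - 1) * r) *\<^sub>R proj_line \<sigma>"

text \<open>A C^2 function near sigma on
  the sphere is represented as the restriction of a C^2 function Psi on an open set U of R^n;
  its Riemannian gradient is the tangential projection of the ambient gradient and its
  Riemannian Hessian (on the tangent space, extended by zero on R sigma) is
  P Hess(Psi) P - (grad Psi . sigma) P, with P the projection onto sigma-perp.\<close>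
definition F_sphere_subharmonic ::
    "(real^'n^'n) set \<Rightarrow> real \<Rightarrow> (real^'n \<Rightarrow> ereal) \<Rightarrow> bool" where
  "F_sphere_subharmonic F p g \<longleftrightarrow>
     (\<forall>\<sigma>\<in>sphere 0 1. g \<sigma> < \<infinity>) \<and> usc_on (sphere 0 1) g \<and>
     (\<forall>\<sigma>\<in>sphere 0 1. \<forall>U \<Psi> D1 D2. open U \<and> \<sigma> \<in> U \<and> C2_with U \<Psi> D1 D2 \<and>
        (\<forall>y\<in>U \<inter> sphere 0 1. g y \<le> ereal (\<Psi> y)) \<and> g \<sigma> = ereal (\<Psi> \<sigma>) \<longrightarrow>
        Phi_jet p \<sigma> (\<Psi> \<sigma>) (proj_perp \<sigma> *v D1 \<sigma>)
          (proj_perp \<sigma> ** D2 \<sigma> ** proj_perp \<sigma> - (D1 \<sigma> \<bullet> \<sigma>) *\<^sub>R proj_perp \<sigma>) \<in> F)"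

definition riesz_kernel :: "real \<Rightarrow> real \<Rightarrow> real" where
  "riesz_kernel p t = (if p < 2 then t powr (2 - p) else - (t powr (2 - p)))"

definition max_fun :: "(real^'n \<Rightarrow> ereal) \<Rightarrow> real \<Rightarrow> ereal" where
  "max_fun u r = Sup (u ` cball 0 r)"

definition small_pairs :: "(real \<times> real) filter" where
  "small_pairs = at (0, 0) within {(r, s). 0 < r \<and> r < s}"

definition theta_quot :: "real \<Rightarrow> (real^'n \<Rightarrow> ereal) \<Rightarrow> real \<times> real \<Rightarrow> ereal" where
  "theta_quot p u = (\<lambda>(r, s). (max_fun u r - max_fun u s) / ereal (riesz_kernel p r - riesz_kernel p s))"

end

theory Submission
  imports Defs "HOL-Real_Asymp.Real_Asymp"
begin

text \<open>
  If \<open>\<Psi>\<close> touches \<open>g\<close> from above at \<open>\<sigma>\<close> on the sphere, then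
  \<open>|x|\<^sup>2\<^sup>-\<^sup>p \<Psi>(x/|x|)\<close> touches \<open>u\<close> from above at \<open>\<sigma>\<close>, and its Euclidean Hessian there is exactly
  \<open>\<Phi>\<close> applied to the Riemannian 2-jet of \<open>\<Psi>\<close>; this gives (1).

  Since \<open>u\<close> is homogeneous of degree \<open>2 - p\<close>, \<open>M(u, r) = r\<^sup>2\<^sup>-\<^sup>p sup g\<close> as soon as \<open>u(0)\<close> lies
  below that value and \<open>r \<mapsto> r\<^sup>2\<^sup>-\<^sup>p sup g\<close> is nondecreasing; the quotient defining \<open>\<Theta>\<close> is then
  constant.  Both conditions come from two facts about \<open>u\<close> at the origin: it is upper
  semicontinuous there, and it has no strict quadratic maximum there, because the Hessian
  \<open>-2 I\<close> of \<open>a - |x|\<^sup>2\<close> does not lie in a cone subequation \<open>F \<noteq> Sym\<^sup>2\<close>.  For \<open>p > 2\<close> this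
  forces \<open>sup g \<le> 0\<close> and \<open>u(0) = -\<infinity>\<close> (or \<open>u(0) \<le> 0\<close> when \<open>sup g = 0\<close>); for \<open>p < 2\<close> it forces
  \<open>u(0) = 0 \<le> sup g < \<infinity>\<close>.
\<close>

section \<open>Matrix algebra\<close>

lemma outer_mult_vec: "outer a b *v h = (b \<bullet> h) *\<^sub>R (a::real^'n)"
  by (simp add: vec_eq_iff outer_def matrix_vector_mult_def inner_vec_def sum_distrib_left
      mult.commute mult.left_commute)

lemma scaleR_matrix_mult_vec: "(c *\<^sub>R (A::real^'n^'m)) *v v = c *\<^sub>R (A *v v)"
  by (simp add: scaleR_matrix_vector_assoc)

lemma proj_perp_mult_vec: "proj_perp e *v v = v - (e \<bullet> v) *\<^sub>R (e::real^'n)"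
  by (simp add: proj_perp_def proj_line_def matrix_vector_mult_diff_rdistrib outer_mult_vec)

lemma continuous_on_outer [continuous_intros]:
  "continuous_on S a \<Longrightarrow> continuous_on S b \<Longrightarrow> continuous_on S (\<lambda>x. outer (a x) (b x :: real^'n))"
  unfolding outer_def by (intro continuous_intros)

lemma continuous_on_matrix_matrix_mult [continuous_intros]:
  fixes A :: "'a::topological_space \<Rightarrow> real^'n^'m" and B :: "'a \<Rightarrow> real^'k^'n"
  shows "continuous_on S A \<Longrightarrow> continuous_on S B \<Longrightarrow> continuous_on S (\<lambda>x. A x ** B x)"
  unfolding matrix_matrix_mult_def by (intro continuous_intros)

lemma continuous_on_matrix_vector_mult [continuous_intros]:
  fixes A :: "'a::topological_space \<Rightarrow> real^'n^'m" and v :: "'a \<Rightarrow> real^'n"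
  shows "continuous_on S A \<Longrightarrow> continuous_on S v \<Longrightarrow> continuous_on S (\<lambda>x. A x *v v x)"
  unfolding matrix_vector_mult_def by (intro continuous_intros)

lemma psd_mat_add_onorm:
  fixes A :: "real^'n^'n"
  assumes "sym_mat A"
  shows "psd_mat (A + onorm ((*v) A) *\<^sub>R mat 1)"
  unfolding psd_mat_def
proof
  show "sym_mat (A + onorm ((*v) A) *\<^sub>R mat 1)"
    using assms by (simp add: sym_mat_def transpose_def vec_eq_iff mat_def)
  show "\<forall>v. 0 \<le> v \<bullet> ((A + onorm ((*v) A) *\<^sub>R mat 1) *v v)"
  proof
    fix v :: "real^'n"
    have "\<bar>v \<bullet> (A *v v)\<bar> \<le> norm v * norm (A *v v)"
      by (rule Cauchy_Schwarz_ineq2)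
    also have "\<dots> \<le> norm v * (onorm ((*v) A) * norm v)"
      by (simp add: onorm matrix_vector_mul_bounded_linear mult_left_mono)
    finally have "\<bar>v \<bullet> (A *v v)\<bar> \<le> onorm ((*v) A) * (v \<bullet> v)"
      by (simp add: power2_norm_eq_inner[symmetric] power2_eq_square algebra_simps)
    then show "0 \<le> v \<bullet> ((A + onorm ((*v) A) *\<^sub>R mat 1) *v v)"
      by (simp add: matrix_vector_mult_add_rdistrib scaleR_matrix_mult_vec inner_add_right)
  qed
qed

section \<open>\<open>C\<^sup>2\<close> functions\<close>

lemma C2_with_subset: "C2_with W f D1 D2 \<Longrightarrow> V \<subseteq> W \<Longrightarrow> C2_with V f D1 D2"
  unfolding C2_with_def by (auto intro: continuous_on_subset)

lemma C2_with_continuous_on: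
  assumes "C2_with V f D1 D2"
  shows "continuous_on V f" "continuous_on V D1"
  using assms unfolding C2_with_def
  by (auto intro!: has_derivative_continuous_on intro: has_derivative_at_withinI)

lemma C2_with_quadratic:
  "C2_with U (\<lambda>y::real^'n. a - (y - x) \<bullet> (y - x)) (\<lambda>y. (-2) *\<^sub>R (y - x)) (\<lambda>y. (-2) *\<^sub>R mat 1)"
  unfolding C2_with_def
proof (intro conjI ballI)
  fix z :: "real^'n"
  show "((\<lambda>y. a - (y - x) \<bullet> (y - x)) has_derivative (\<lambda>h. (-2) *\<^sub>R (z - x) \<bullet> h)) (at z)"
    by (rule derivative_eq_intros refl | simp add: inner_commute)+
  show "((\<lambda>y. (-2) *\<^sub>R (y - x)) has_derivative (\<lambda>h. ((-2) *\<^sub>R mat 1) *v h)) (at z)"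
    unfolding scaleR_matrix_mult_vec matrix_vector_mul_lid
    by (rule derivative_eq_intros refl | simp)+
qed (simp add: continuous_on_const)

lemma C2_with_mult:
  assumes A: "C2_with V a Da D2a" and B: "C2_with V b Db D2b"
  shows "C2_with V (\<lambda>x. a x * b x) (\<lambda>x. a x *\<^sub>R Db x + b x *\<^sub>R Da x)
     (\<lambda>x. a x *\<^sub>R D2b x + b x *\<^sub>R D2a x + outer (Db x) (Da x) + outer (Da x) (Db x))"
  unfolding C2_with_def
proof (intro conjI ballI)
  fix x assume x: "x \<in> V"
  have a1: "(a has_derivative (\<lambda>h. Da x \<bullet> h)) (at x)" and a2: "(Da has_derivative (\<lambda>h. D2a x *v h)) (at x)"
    and b1: "(b has_derivative (\<lambda>h. Db x \<bullet> h)) (at x)" and b2: "(Db has_derivative (\<lambda>h. D2b x *v h)) (at x)"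
    using A B x unfolding C2_with_def by auto
  show "((\<lambda>x. a x * b x) has_derivative (\<lambda>h. (a x *\<^sub>R Db x + b x *\<^sub>R Da x) \<bullet> h)) (at x)"
    by (rule has_derivative_eq_rhs[OF has_derivative_mult[OF a1 b1]])
      (simp add: fun_eq_iff inner_add_right inner_commute mult.commute)
  show "((\<lambda>x. a x *\<^sub>R Db x + b x *\<^sub>R Da x) has_derivative
     (\<lambda>h. (a x *\<^sub>R D2b x + b x *\<^sub>R D2a x + outer (Db x) (Da x) + outer (Da x) (Db x)) *v h)) (at x)"
    by (rule has_derivative_eq_rhs[OF has_derivative_add[OF has_derivative_scaleR[OF a1 b2]
          has_derivative_scaleR[OF b1 a2]]])
      (simp add: fun_eq_iff matrix_vector_mult_add_rdistrib scaleR_matrix_mult_vec outer_mult_vec add_ac)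
next
  have "continuous_on V D2a" "continuous_on V D2b"
    using A B unfolding C2_with_def by auto
  then show "continuous_on V (\<lambda>x. a x *\<^sub>R D2b x + b x *\<^sub>R D2a x + outer (Db x) (Da x) + outer (Da x) (Db x))"
    using C2_with_continuous_on[OF A] C2_with_continuous_on[OF B] by (intro continuous_intros)
qed

lemma has_derivative_norm_powr:
  fixes x :: "'a::real_inner"
  assumes x: "x \<noteq> 0"
  shows "((\<lambda>x. norm x powr k) has_derivative (\<lambda>h. ((k * norm x powr (k - 2)) *\<^sub>R x) \<bullet> h)) (at x)"
proof -
  have "((\<lambda>x. norm x powr k) has_derivative
      (\<lambda>h. norm x powr k * (0 * ln (norm x) + (h \<bullet> sgn x) * k / norm x))) (at x)"
    by (rule has_derivative_powr[OF has_derivative_norm[OF x] has_derivative_const]) (use x in simp_all)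
  then show ?thesis
    by (rule has_derivative_eq_rhs)
      (use x in \<open>auto simp: fun_eq_iff powr_diff sgn_div_norm inner_commute power2_eq_square field_simps\<close>)
qed

lemma C2_with_norm_powr:
  "C2_with (- {0}) (\<lambda>x::real^'n. norm x powr k) (\<lambda>x. (k * norm x powr (k - 2)) *\<^sub>R x)
     (\<lambda>x. (k * norm x powr (k - 2)) *\<^sub>R mat 1 + (k * (k - 2) * norm x powr (k - 2 - 2)) *\<^sub>R outer x x)"
  unfolding C2_with_def
proof (intro conjI ballI)
  fix x :: "real^'n" assume "x \<in> - {0}"
  then have x: "x \<noteq> 0" by simp
  show "((\<lambda>x. norm x powr k) has_derivative (\<lambda>h. ((k * norm x powr (k - 2)) *\<^sub>R x) \<bullet> h)) (at x)"
    by (rule has_derivative_norm_powr[OF x])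
  show "((\<lambda>x. (k * norm x powr (k - 2)) *\<^sub>R x) has_derivative (\<lambda>h. ((k * norm x powr (k - 2)) *\<^sub>R mat 1
      + (k * (k - 2) * norm x powr (k - 2 - 2)) *\<^sub>R outer x x) *v h)) (at x)"
    by (rule has_derivative_eq_rhs[OF has_derivative_scaleR[OF
          has_derivative_mult_right[OF has_derivative_norm_powr[OF x]] has_derivative_ident]])
      (simp add: fun_eq_iff matrix_vector_mult_add_rdistrib scaleR_matrix_mult_vec outer_mult_vec algebra_simps)
qed (intro continuous_intros; auto)

lemma has_derivative_sgn:
  fixes x :: "'a::real_inner"
  assumes x: "x \<noteq> 0"
  shows "(sgn has_derivative (\<lambda>h. inverse (norm x) *\<^sub>R (h - (sgn x \<bullet> h) *\<^sub>R sgn x))) (at x)"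
proof -
  have "((\<lambda>x. inverse (norm x)) has_derivative
      (\<lambda>h. - (inverse (norm x) * (h \<bullet> sgn x) * inverse (norm x)))) (at x)"
    by (rule Deriv.has_derivative_inverse[OF _ has_derivative_norm[OF x]]) (use x in auto)
  from has_derivative_scaleR[OF this has_derivative_ident] show ?thesis
    unfolding sgn_div_norm[abs_def]
    by (rule has_derivative_eq_rhs) (simp add: fun_eq_iff algebra_simps inner_commute)
qed

text \<open>The Hessian at a unit vector \<open>s\<close> of \<open>x \<mapsto> \<Psi>(x/|x|)\<close>, where \<open>a\<close> and \<open>B\<close> are the
  gradient and Hessian of \<open>\<Psi>\<close> at \<open>s\<close>.\<close>
definition hessian_comp_sgn :: "real^'n \<Rightarrow> real^'n \<Rightarrow> real^'n^'n \<Rightarrow> real^'n^'n" where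
  "hessian_comp_sgn s a B = proj_perp s ** B ** proj_perp s - (a \<bullet> s) *\<^sub>R proj_perp s
     - outer s (proj_perp s *v a) - outer (proj_perp s *v a) s"

lemma sgn_chain_rule_eq_hessian_comp_sgn:
  fixes s h a :: "real^'n" and B :: "real^'n^'n"
  shows "c *\<^sub>R (B *v (c *\<^sub>R (h - (s \<bullet> h) *\<^sub>R s)) - ((a \<bullet> s) *\<^sub>R (c *\<^sub>R (h - (s \<bullet> h) *\<^sub>R s))
      + (a \<bullet> (c *\<^sub>R (h - (s \<bullet> h) *\<^sub>R s)) + (B *v (c *\<^sub>R (h - (s \<bullet> h) *\<^sub>R s))) \<bullet> s) *\<^sub>R s))
      + (- (c * (h \<bullet> s) * c)) *\<^sub>R (a - (a \<bullet> s) *\<^sub>R s)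
   = (c * c) *\<^sub>R (hessian_comp_sgn s a B *v h)"
  by (simp add: hessian_comp_sgn_def proj_perp_def proj_line_def matrix_vector_mult_diff_rdistrib
      scaleR_matrix_mult_vec outer_mult_vec matrix_vector_mul_assoc[symmetric]
      matrix_vector_mult_diff_distrib matrix_vector_mult_scaleR inner_diff_left inner_diff_right
      scaleR_diff_right algebra_simps inner_commute)

lemma has_derivative_gradient_comp_sgn:
  fixes D1 :: "real^'n \<Rightarrow> real^'n"
  assumes x: "x \<noteq> 0" and d2: "(D1 has_derivative (\<lambda>h. B *v h)) (at (sgn x))"
  shows "((\<lambda>x. inverse (norm x) *\<^sub>R (proj_perp (sgn x) *v D1 (sgn x))) has_derivative
     (\<lambda>h. ((inverse (norm x) * inverse (norm x)) *\<^sub>R hessian_comp_sgn (sgn x) (D1 (sgn x)) B) *v h)) (at x)"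
proof -
  define c where "c = inverse (norm x)"
  define dsgn where "dsgn h = c *\<^sub>R (h - (sgn x \<bullet> h) *\<^sub>R sgn x)" for h
  have S: "(sgn has_derivative dsgn) (at x)"
    unfolding dsgn_def c_def by (rule has_derivative_sgn[OF x])
  have dD1: "((\<lambda>x. D1 (sgn x)) has_derivative (\<lambda>h. B *v dsgn h)) (at x)"
    by (rule has_derivative_compose[OF S d2])
  have dG: "((\<lambda>x. inverse (norm x) *\<^sub>R (D1 (sgn x) - (D1 (sgn x) \<bullet> sgn x) *\<^sub>R sgn x)) has_derivative
     (\<lambda>h. c *\<^sub>R (B *v dsgn h - ((D1 (sgn x) \<bullet> sgn x) *\<^sub>R dsgn h
        + (D1 (sgn x) \<bullet> dsgn h + (B *v dsgn h) \<bullet> sgn x) *\<^sub>R sgn x))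
       + (- (c * (h \<bullet> sgn x) * c)) *\<^sub>R (D1 (sgn x) - (D1 (sgn x) \<bullet> sgn x) *\<^sub>R sgn x))) (at x)"
    unfolding c_def
    by (rule has_derivative_scaleR[OF Deriv.has_derivative_inverse[OF _ has_derivative_norm[OF x]]
          has_derivative_diff[OF dD1 has_derivative_scaleR[OF has_derivative_inner[OF dD1 S] S]]])
      (use x in auto)
  have G_eq: "(\<lambda>x. inverse (norm x) *\<^sub>R (proj_perp (sgn x) *v D1 (sgn x)))
      = (\<lambda>x. inverse (norm x) *\<^sub>R (D1 (sgn x) - (D1 (sgn x) \<bullet> sgn x) *\<^sub>R sgn x))"
    by (simp add: proj_perp_mult_vec inner_commute)
  show ?thesis
    unfolding G_eq by (rule has_derivative_eq_rhs[OF dG])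
      (simp only: fun_eq_iff scaleR_matrix_mult_vec dsgn_def c_def sgn_chain_rule_eq_hessian_comp_sgn, simp)
qed

lemma C2_with_comp_sgn:
  fixes \<Psi> :: "real^'n \<Rightarrow> real"
  assumes C: "C2_with U \<Psi> D1 D2"
  shows "C2_with {x. x \<noteq> 0 \<and> sgn x \<in> U} (\<lambda>x. \<Psi> (sgn x))
     (\<lambda>x. inverse (norm x) *\<^sub>R (proj_perp (sgn x) *v D1 (sgn x)))
     (\<lambda>x. (inverse (norm x) * inverse (norm x)) *\<^sub>R hessian_comp_sgn (sgn x) (D1 (sgn x)) (D2 (sgn x)))"
  unfolding C2_with_def
proof (intro conjI ballI)
  fix x assume "x \<in> {x. x \<noteq> 0 \<and> sgn x \<in> U}"
  then have x: "x \<noteq> 0" and sx: "sgn x \<in> U" by auto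
  have d1: "(\<Psi> has_derivative (\<lambda>h. D1 (sgn x) \<bullet> h)) (at (sgn x))"
   and d2: "(D1 has_derivative (\<lambda>h. D2 (sgn x) *v h)) (at (sgn x))"
    using C sx unfolding C2_with_def by auto
  show "((\<lambda>x. \<Psi> (sgn x)) has_derivative
      (\<lambda>h. inverse (norm x) *\<^sub>R (proj_perp (sgn x) *v D1 (sgn x)) \<bullet> h)) (at x)"
    by (rule has_derivative_eq_rhs[OF has_derivative_compose[OF has_derivative_sgn[OF x] d1]])
      (simp add: fun_eq_iff proj_perp_mult_vec algebra_simps inner_diff_left inner_diff_right inner_commute)
  show "((\<lambda>x. inverse (norm x) *\<^sub>R (proj_perp (sgn x) *v D1 (sgn x))) has_derivative
     (\<lambda>h. ((inverse (norm x) * inverse (norm x)) *\<^sub>R hessian_comp_sgn (sgn x) (D1 (sgn x)) (D2 (sgn x))) *v h)) (at x)"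
    by (rule has_derivative_gradient_comp_sgn[OF x d2])
next
  have sgn: "continuous_on {x. x \<noteq> 0 \<and> sgn x \<in> U} sgn"
    by (rule continuous_on_subset[of "- {0}"]) (auto simp: sgn_div_norm intro!: continuous_intros)
  have into: "sgn ` {x. x \<noteq> 0 \<and> sgn x \<in> U} \<subseteq> U" by auto
  have "continuous_on {x. x \<noteq> 0 \<and> sgn x \<in> U} (\<lambda>x. D2 (sgn x))"
    using C unfolding C2_with_def by (intro continuous_on_compose2[OF _ sgn into]) auto
  moreover have "continuous_on {x. x \<noteq> 0 \<and> sgn x \<in> U} (\<lambda>x. D1 (sgn x))"
    by (rule continuous_on_compose2[OF C2_with_continuous_on(2)[OF C] sgn into])
  ultimately show "continuous_on {x. x \<noteq> 0 \<and> sgn x \<in> U}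
      (\<lambda>x. (inverse (norm x) * inverse (norm x)) *\<^sub>R hessian_comp_sgn (sgn x) (D1 (sgn x)) (D2 (sgn x)))"
    unfolding hessian_comp_sgn_def proj_perp_def proj_line_def using sgn
    by (intro continuous_intros) auto
qed

section \<open>Cone subequations and \<open>F\<close>-subharmonic functions\<close>

text \<open>Otherwise every symmetric matrix would lie in \<open>F\<close>: \<open>A = c/K \<cdot> (-K I) + (A + c I)\<close>
  with \<open>A + c I\<close> positive semidefinite for \<open>c\<close> the operator norm of \<open>A\<close>.\<close>
lemma cone_subequation_neg_identity_notin:
  fixes F :: "(real^'n^'n) set"
  assumes F: "cone_subequation F" and K: "K > 0"
  shows "(- K) *\<^sub>R mat 1 \<notin> F"
proof
  assume negF: "(- K) *\<^sub>R mat 1 \<in> F"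
  have "A \<in> F" if "sym_mat A" for A :: "real^'n^'n"
  proof -
    define c where "c = onorm ((*v) A)"
    have "c / K \<ge> 0"
      unfolding c_def using onorm_pos_le[OF matrix_vector_mul_bounded_linear, of A] K by simp
    then have "(c / K) *\<^sub>R ((- K) *\<^sub>R mat 1) \<in> F"
      using F negF unfolding cone_subequation_def by blast
    then have "(c / K) *\<^sub>R ((- K) *\<^sub>R mat 1) + (A + c *\<^sub>R mat 1) \<in> F"
      using F psd_mat_add_onorm[OF that] unfolding cone_subequation_def c_def by blast
    moreover have "(c / K) *\<^sub>R ((- K) *\<^sub>R mat 1) + (A + c *\<^sub>R mat 1) = A"
      using K by simp
    ultimately show ?thesis by metis
  qed
  then show False
    using F unfolding cone_subequation_def by auto
qed

lemma F_subharmonicD: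
  "F_subharmonic F u \<Longrightarrow> open U \<Longrightarrow> x \<in> U \<Longrightarrow> C2_with U \<phi> D1 D2 \<Longrightarrow>
   \<forall>y\<in>U. u y \<le> ereal (\<phi> y) \<Longrightarrow> u x = ereal (\<phi> x) \<Longrightarrow> D2 x \<in> F"
  unfolding F_subharmonic_def by blast

lemma F_subharmonic_eventually_less:
  "F_subharmonic F u \<Longrightarrow> u x < c \<Longrightarrow> eventually (\<lambda>y. u y < c) (at x)"
  unfolding F_subharmonic_def usc_on_def by auto

lemma usc_on_restrict:
  assumes "usc_on UNIV u" and "\<And>x. x \<in> S \<Longrightarrow> g x = u x"
  shows "usc_on S g"
  unfolding usc_on_def
proof (intro ballI allI impI)
  fix x c assume x: "x \<in> S" and "g x < c"
  then have "eventually (\<lambda>y. u y < c) (at x)"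
    using assms unfolding usc_on_def by auto
  then have "eventually (\<lambda>y. u y < c) (at x within S)"
    by (rule filter_leD[OF at_le, rotated]) simp
  moreover have "eventually (\<lambda>y. y \<in> S) (at x within S)"
    by (simp add: eventually_at_filter)
  ultimately show "eventually (\<lambda>y. g y < c) (at x within S)"
    by eventually_elim (use assms(2) in auto)
qed

text \<open>The test function \<open>a - |y - x|\<^sup>2\<close> has Hessian \<open>-2 I \<notin> F\<close>.\<close>
lemma F_subharmonic_no_quadratic_peak:
  fixes F :: "(real^'n^'n) set"
  assumes F: "cone_subequation F" and u: "F_subharmonic F u" and ux: "u x = ereal a"
    and \<delta>: "\<delta> > 0" and le: "\<forall>y\<in>ball x \<delta>. u y \<le> ereal (a - (norm (y - x))\<^sup>2)"
  shows False
proof -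
  have "(\<lambda>y. (-2) *\<^sub>R (mat 1::real^'n^'n)) x \<in> F"
    by (rule F_subharmonicD[where x = x, OF u open_ball _ C2_with_quadratic[of _ a x]])
      (use \<delta> ux le in \<open>simp_all add: power2_norm_eq_inner\<close>)
  then show False
    using cone_subequation_neg_identity_notin[OF F, of 2] by simp
qed

section \<open>Functions homogeneous of degree \<open>2 - p\<close>\<close>

definition homogeneous_ext :: "real \<Rightarrow> ereal \<Rightarrow> (real^'n \<Rightarrow> ereal) \<Rightarrow> real^'n \<Rightarrow> ereal" where
  "homogeneous_ext p u0 g x = (if x = 0 then u0 else ereal (norm x powr (2 - p)) * g (sgn x))"

lemma homogeneous_ext_sphere: "norm \<sigma> = 1 \<Longrightarrow> homogeneous_ext p u0 g \<sigma> = g \<sigma>"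
  by (auto simp: homogeneous_ext_def sgn_div_norm)

lemma homogeneous_ext_ray:
  "norm \<sigma> = 1 \<Longrightarrow> t > 0 \<Longrightarrow> homogeneous_ext p u0 g (t *\<^sub>R \<sigma>) = ereal (t powr (2 - p)) * g \<sigma>"
  by (auto simp: homogeneous_ext_def sgn_div_norm)

lemma homogeneous_ext_center_less_PInf:
  assumes "F_subharmonic F (homogeneous_ext p u0 g)"
  shows "u0 < \<infinity>"
proof -
  have "homogeneous_ext p u0 g 0 < \<infinity>"
    using assms unfolding F_subharmonic_def by blast
  then show ?thesis
    by (simp add: homogeneous_ext_def)
qed

lemma homogeneous_ext_le_Sup:
  assumes S: "Sup (g ` sphere 0 1) = ereal s" and y: "y \<noteq> 0"
  shows "homogeneous_ext p u0 g y \<le> ereal (norm y powr (2 - p) * s)"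
proof -
  have "g (sgn y) \<le> ereal s"
    unfolding S[symmetric] using y by (intro SUP_upper) (simp add: norm_sgn)
  then have "ereal (norm y powr (2 - p)) * g (sgn y) \<le> ereal (norm y powr (2 - p)) * ereal s"
    by (rule ereal_mult_left_mono) simp
  then show ?thesis
    using y by (simp add: homogeneous_ext_def)
qed

text \<open>The Hessian at a unit vector \<open>\<sigma>\<close> of \<open>|x|\<^sup>2\<^sup>-\<^sup>p \<Psi>(x/|x|)\<close>, computed by the product rule from
  \<open>C2_with_norm_powr\<close> and \<open>C2_with_comp_sgn\<close>, written in terms of the 2-jet \<open>(r, q, H)\<close> of \<open>\<Psi>\<close>.\<close>
lemma Phi_jet_eq:
  "Phi_jet p \<sigma> r q H = (H - outer \<sigma> q - outer q \<sigma>)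
     + r *\<^sub>R ((2 - p) *\<^sub>R mat 1 + ((2 - p) * (- p)) *\<^sub>R outer \<sigma> \<sigma>)
     + outer q ((2 - p) *\<^sub>R \<sigma>) + outer ((2 - p) *\<^sub>R \<sigma>) (q::real^'n)"
  by (simp add: Phi_jet_def proj_perp_def proj_line_def outer_def vec_eq_iff algebra_simps)

lemma homogeneous_ext_sphere_test:
  fixes F :: "(real^'n^'n) set" and g :: "real^'n \<Rightarrow> ereal"
  assumes u: "F_subharmonic F (homogeneous_ext p u0 g)"
    and \<sigma>: "norm \<sigma> = 1" and U: "open U" "\<sigma> \<in> U" and C: "C2_with U \<Psi> D1 D2"
    and le: "\<forall>y\<in>U \<inter> sphere 0 1. g y \<le> ereal (\<Psi> y)" and eq: "g \<sigma> = ereal (\<Psi> \<sigma>)"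
  shows "Phi_jet p \<sigma> (\<Psi> \<sigma>) (proj_perp \<sigma> *v D1 \<sigma>)
           (proj_perp \<sigma> ** D2 \<sigma> ** proj_perp \<sigma> - (D1 \<sigma> \<bullet> \<sigma>) *\<^sub>R proj_perp \<sigma>) \<in> F"
proof -
  define V where "V = {x::real^'n. x \<noteq> 0 \<and> sgn x \<in> U}"
  have "continuous_on (- {0}) (sgn :: real^'n \<Rightarrow> _)"
    by (auto simp: sgn_div_norm intro!: continuous_intros)
  then have "open (- {0} \<inter> sgn -` U)"
    using U(1) by (intro continuous_open_preimage) auto
  moreover have "- {0} \<inter> sgn -` U = V"
    unfolding V_def by auto
  ultimately have V: "open V"
    by simp
  have sgn\<sigma>: "sgn \<sigma> = \<sigma>"
    using \<sigma> by (simp add: sgn_div_norm)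
  have \<sigma>V: "\<sigma> \<in> V"
    using \<sigma> U(2) sgn\<sigma> by (auto simp: V_def)
  have leV: "\<forall>y\<in>V. homogeneous_ext p u0 g y \<le> ereal (norm y powr (2 - p) * \<Psi> (sgn y))"
  proof
    fix y assume "y \<in> V"
    then have "y \<noteq> 0" "g (sgn y) \<le> ereal (\<Psi> (sgn y))"
      using le by (auto simp: V_def norm_sgn)
    then show "homogeneous_ext p u0 g y \<le> ereal (norm y powr (2 - p) * \<Psi> (sgn y))"
      by (simp add: homogeneous_ext_def ereal_mult_left_mono flip: times_ereal.simps(1))
  qed
  have eq\<sigma>: "homogeneous_ext p u0 g \<sigma> = ereal (norm \<sigma> powr (2 - p) * \<Psi> (sgn \<sigma>))"
    using \<sigma> eq sgn\<sigma> by (simp add: homogeneous_ext_sphere)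
  have "V \<subseteq> - {0}"
    by (auto simp: V_def)
  note C2 = C2_with_mult[OF C2_with_subset[OF C2_with_norm_powr this] C2_with_comp_sgn[OF C, folded V_def]]
  from F_subharmonicD[OF u V \<sigma>V C2 leV eq\<sigma>] show ?thesis
    by (simp add: \<sigma> sgn\<sigma> Phi_jet_eq hessian_comp_sgn_def)
qed

lemma F_sphere_subharmonic_of_homogeneous_ext:
  fixes F :: "(real^'n^'n) set" and g :: "real^'n \<Rightarrow> ereal"
  assumes u: "F_subharmonic F (homogeneous_ext p u0 g)" and g: "\<forall>\<sigma>\<in>sphere 0 1. g \<sigma> < \<infinity>"
  shows "F_sphere_subharmonic F p g"
  unfolding F_sphere_subharmonic_def
proof (intro conjI ballI allI impI)
  have "usc_on UNIV (homogeneous_ext p u0 g)"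
    using u unfolding F_subharmonic_def by blast
  then show "usc_on (sphere 0 1) g"
    by (rule usc_on_restrict) (simp add: homogeneous_ext_sphere)
next
  fix \<sigma> :: "real^'n" and U \<Psi> D1 D2
  assume "\<sigma> \<in> sphere 0 1" and "open U \<and> \<sigma> \<in> U \<and> C2_with U \<Psi> D1 D2 \<and>
    (\<forall>y\<in>U \<inter> sphere 0 1. g y \<le> ereal (\<Psi> y)) \<and> g \<sigma> = ereal (\<Psi> \<sigma>)"
  then show "Phi_jet p \<sigma> (\<Psi> \<sigma>) (proj_perp \<sigma> *v D1 \<sigma>)
      (proj_perp \<sigma> ** D2 \<sigma> ** proj_perp \<sigma> - (D1 \<sigma> \<bullet> \<sigma>) *\<^sub>R proj_perp \<sigma>) \<in> F"
    by (intro homogeneous_ext_sphere_test[OF u, of \<sigma> U]) simp_all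
qed (use g in blast)

section \<open>The value at the origin and the supremum on the sphere\<close>

lemma homogeneous_ext_no_peak:
  fixes F :: "(real^'n^'n) set"
  assumes F: "cone_subequation F" and u: "F_subharmonic F (homogeneous_ext p u0 g)"
    and S: "Sup (g ` sphere 0 1) = ereal s" and u0: "u0 = ereal a"
    and small: "eventually (\<lambda>t. t powr (2 - p) * s + t\<^sup>2 \<le> a) (at_right 0)"
  shows False
proof -
  obtain \<delta> where \<delta>: "\<delta> > 0" and le: "\<And>t. 0 < t \<Longrightarrow> t < \<delta> \<Longrightarrow> t powr (2 - p) * s + t\<^sup>2 \<le> a"
    using small unfolding eventually_at_right_field by blast
  show False
  proof (rule F_subharmonic_no_quadratic_peak[OF F u _ \<delta>])
    show "homogeneous_ext p u0 g 0 = ereal a"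
      by (simp add: homogeneous_ext_def u0)
    show "\<forall>y\<in>ball 0 \<delta>. homogeneous_ext p u0 g y \<le> ereal (a - (norm (y - 0))\<^sup>2)"
    proof
      fix y :: "real^'n" assume y: "y \<in> ball 0 \<delta>"
      show "homogeneous_ext p u0 g y \<le> ereal (a - (norm (y - 0))\<^sup>2)"
      proof (cases "y = 0")
        case True
        then show ?thesis by (simp add: homogeneous_ext_def u0)
      next
        case False
        have "norm y powr (2 - p) * s \<le> a - (norm y)\<^sup>2"
          using le[of "norm y"] y False by simp
        then show ?thesis
          by (intro order_trans[OF homogeneous_ext_le_Sup[OF S False]]) simp
      qed
    qed
  qed
qed

lemma eventually_at_0_along_ray:
  fixes \<sigma> :: "'a::real_normed_vector"
  assumes "eventually P (at 0)" and "\<sigma> \<noteq> 0"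
  shows "eventually (\<lambda>t. P (t *\<^sub>R \<sigma>)) (at_right 0)"
proof -
  have "filterlim (\<lambda>t. t *\<^sub>R \<sigma>) (at 0) (at_right (0::real))"
    unfolding filterlim_at using assms(2)
    by (auto simp: eventually_at_filter intro!: tendsto_eq_intros)
  with assms(1) show ?thesis
    by (rule eventually_compose_filterlim)
qed

lemma homogeneous_ext_ray_eventually_less:
  assumes u: "F_subharmonic F (homogeneous_ext p u0 g)" and u0: "u0 < ereal M"
    and \<sigma>: "\<sigma> \<in> sphere 0 1"
  shows "eventually (\<lambda>t. t > 0 \<and> ereal (t powr (2 - p)) * g \<sigma> < ereal M) (at_right 0)"
proof -
  have "eventually (\<lambda>y. homogeneous_ext p u0 g y < ereal M) (at 0)"
    using u0 by (intro F_subharmonic_eventually_less[OF u]) (simp add: homogeneous_ext_def)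
  then have "eventually (\<lambda>t. homogeneous_ext p u0 g (t *\<^sub>R \<sigma>) < ereal M) (at_right 0)"
    using \<sigma> by (intro eventually_at_0_along_ray) auto
  with eventually_at_right_less[of 0] show ?thesis
    by eventually_elim (use \<sigma> in \<open>simp add: homogeneous_ext_ray\<close>)
qed

lemma homogeneous_ext_Sup_le_0:
  fixes g :: "real^'n \<Rightarrow> ereal"
  assumes u: "F_subharmonic F (homogeneous_ext p u0 g)" and p: "p > 2"
    and g: "\<forall>\<sigma>\<in>sphere 0 1. g \<sigma> < \<infinity>"
  shows "Sup (g ` sphere 0 1) \<le> 0"
proof (rule ccontr)
  assume "\<not> Sup (g ` sphere 0 1) \<le> 0"
  then obtain \<sigma> where \<sigma>: "\<sigma> \<in> sphere 0 1" and "0 < g \<sigma>"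
    by (auto simp: not_le less_SUP_iff)
  with g obtain c where c: "g \<sigma> = ereal c" "c > 0"
    by (cases "g \<sigma>") auto
  have "u0 < \<infinity>"
    by (rule homogeneous_ext_center_less_PInf[OF u])
  then obtain M where "u0 < ereal M"
    using less_PInf_Ex_of_nat by blast
  note below = homogeneous_ext_ray_eventually_less[OF u this \<sigma>]
  have "filterlim (\<lambda>t. t powr (2 - p) * c) at_top (at_right 0)"
    using p c by real_asymp
  then have "eventually (\<lambda>t. M \<le> t powr (2 - p) * c) (at_right 0)"
    by (simp add: filterlim_at_top)
  with below have "eventually (\<lambda>t::real. False) (at_right 0)"
    by eventually_elim (simp add: c)
  then show False
    by simp
qed

lemma homogeneous_ext_center_MInf:
  fixes F :: "(real^'n^'n) set"
  assumes F: "cone_subequation F" and u: "F_subharmonic F (homogeneous_ext p u0 g)"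
    and S: "Sup (g ` sphere 0 1) = ereal s" and p: "p > 2" and s: "s < 0"
  shows "u0 = -\<infinity>"
proof (rule ccontr)
  assume "u0 \<noteq> -\<infinity>"
  moreover have "u0 < \<infinity>"
    by (rule homogeneous_ext_center_less_PInf[OF u])
  ultimately obtain a where a: "u0 = ereal a"
    by (cases u0) auto
  have "filterlim (\<lambda>t. t powr (2 - p) * s + t\<^sup>2) at_bot (at_right 0)"
    using p s by real_asymp
  then have "eventually (\<lambda>t. t powr (2 - p) * s + t\<^sup>2 \<le> a) (at_right 0)"
    by (simp add: filterlim_at_bot)
  then show False
    by (rule homogeneous_ext_no_peak[OF F u S a])
qed

lemma homogeneous_ext_center_nonpos:
  fixes F :: "(real^'n^'n) set"
  assumes F: "cone_subequation F" and u: "F_subharmonic F (homogeneous_ext p u0 g)"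
    and S: "Sup (g ` sphere 0 1) = ereal s"
    and lim: "((\<lambda>t. t powr (2 - p) * s) \<longlongrightarrow> 0) (at_right 0)"
  shows "u0 \<le> 0"
proof (rule ccontr)
  assume "\<not> u0 \<le> 0"
  moreover have "u0 < \<infinity>"
    by (rule homogeneous_ext_center_less_PInf[OF u])
  ultimately obtain a where a: "u0 = ereal a" "a > 0"
    by (cases u0) auto
  have "((\<lambda>t. t powr (2 - p) * s + t\<^sup>2) \<longlongrightarrow> 0) (at_right 0)"
    using tendsto_add[OF lim, of "\<lambda>t. t\<^sup>2" 0] by (simp add: tendsto_eq_intros)
  then have "eventually (\<lambda>t. t powr (2 - p) * s + t\<^sup>2 < a) (at_right 0)"
    using a(2) by (rule order_tendstoD)
  then have "eventually (\<lambda>t. t powr (2 - p) * s + t\<^sup>2 \<le> a) (at_right 0)"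
    by (rule eventually_mono) simp
  then show False
    by (rule homogeneous_ext_no_peak[OF F u S a(1)])
qed

lemma homogeneous_ext_center_nonneg:
  assumes u: "F_subharmonic F (homogeneous_ext p u0 g)" and p: "p < 2"
    and \<sigma>: "\<sigma> \<in> sphere 0 1" and c: "g \<sigma> = ereal c"
  shows "0 \<le> u0"
proof (rule ccontr)
  assume "\<not> 0 \<le> u0"
  then obtain M where M: "u0 < ereal M" "M < 0"
    using ereal_dense2[of u0 0] by (auto simp: not_le)
  note below = homogeneous_ext_ray_eventually_less[OF u M(1) \<sigma>]
  have "((\<lambda>t. t powr (2 - p)) \<longlongrightarrow> 0) (at_right 0)"
    using p by real_asymp
  then have "((\<lambda>t. t powr (2 - p) * c) \<longlongrightarrow> 0) (at_right 0)"
    by (rule tendsto_mult_left_zero)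
  then have "eventually (\<lambda>t. M < t powr (2 - p) * c) (at_right 0)"
    using M(2) by (rule order_tendstoD)
  with below have "eventually (\<lambda>t::real. False) (at_right 0)"
    by eventually_elim (simp add: c)
  then show False
    by simp
qed

lemma homogeneous_ext_Sup_less_PInf:
  fixes g :: "real^'n \<Rightarrow> ereal"
  assumes u: "F_subharmonic F (homogeneous_ext p u0 g)" and u0: "u0 = ereal a"
    and g: "\<forall>\<sigma>\<in>sphere 0 1. g \<sigma> < \<infinity>"
  shows "Sup (g ` sphere 0 1) < \<infinity>"
proof -
  have "eventually (\<lambda>y. homogeneous_ext p u0 g y < ereal (a + 1)) (at 0)"
    using u0 by (intro F_subharmonic_eventually_less[OF u]) (simp add: homogeneous_ext_def)
  then obtain d where d: "d > 0"
    and below: "\<And>y. y \<noteq> 0 \<Longrightarrow> norm y < d \<Longrightarrow> homogeneous_ext p u0 g y < ereal (a + 1)"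
    unfolding eventually_at by (auto simp: dist_norm)
  define t where "t = d / 2"
  have t: "t > 0" "t < d"
    using d by (auto simp: t_def)
  have "g \<sigma> \<le> ereal ((a + 1) / t powr (2 - p))" if \<sigma>: "\<sigma> \<in> sphere 0 1" for \<sigma>
  proof -
    have "t *\<^sub>R \<sigma> \<noteq> 0"
      using \<sigma> t by auto
    then have "ereal (t powr (2 - p)) * g \<sigma> < ereal (a + 1)"
      using below[of "t *\<^sub>R \<sigma>"] \<sigma> t by (simp add: homogeneous_ext_ray)
    then show ?thesis
      using g \<sigma> t by (cases "g \<sigma>") (auto simp: field_simps)
  qed
  then have "Sup (g ` sphere 0 1) \<le> ereal ((a + 1) / t powr (2 - p))"
    by (rule SUP_least)
  then show ?thesis
    by (auto simp: order_le_less_trans)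
qed

lemma homogeneous_ext_Sup_and_center:
  fixes F :: "(real^'n^'n) set" and g :: "real^'n \<Rightarrow> ereal"
  assumes F: "cone_subequation F" and u: "F_subharmonic F (homogeneous_ext p u0 g)"
    and p: "0 < p" "p \<noteq> 2" and g: "\<forall>\<sigma>\<in>sphere 0 1. g \<sigma> < \<infinity>"
    and \<sigma>0: "\<sigma>0 \<in> sphere 0 1" and c0: "g \<sigma>0 = ereal c0"
  obtains s where "Sup (g ` sphere 0 1) = ereal s" and "0 \<le> (2 - p) * s"
    and "\<And>r. r > 0 \<Longrightarrow> u0 \<le> ereal (r powr (2 - p) * s)"
proof -
  have lower: "ereal c0 \<le> Sup (g ` sphere 0 1)"
    unfolding c0[symmetric] using \<sigma>0 by (rule SUP_upper)
  consider "p < 2" | "p > 2"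
    using p by linarith
  then show ?thesis
  proof cases
    case 1
    have "0 \<le> u0"
      by (rule homogeneous_ext_center_nonneg[OF u 1 \<sigma>0 c0])
    moreover have "u0 < \<infinity>"
      by (rule homogeneous_ext_center_less_PInf[OF u])
    ultimately obtain a where a: "u0 = ereal a" "0 \<le> a"
      by (cases u0) auto
    have "Sup (g ` sphere 0 1) < \<infinity>"
      by (rule homogeneous_ext_Sup_less_PInf[OF u a(1) g])
    with lower obtain s where S: "Sup (g ` sphere 0 1) = ereal s"
      by (cases "Sup (g ` sphere 0 1)") auto
    have "((\<lambda>t. t powr (2 - p)) \<longlongrightarrow> 0) (at_right 0)"
      using 1 by real_asymp
    then have "u0 \<le> 0"
      by (intro homogeneous_ext_center_nonpos[OF F u S] tendsto_mult_left_zero)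
    with a have u0: "u0 = ereal 0"
      by simp
    have "0 \<le> s"
    proof (rule ccontr)
      assume "\<not> 0 \<le> s"
      then have "eventually (\<lambda>t. t powr (2 - p) * s + t\<^sup>2 < 0) (at_right 0)"
        using 1 p(1) by real_asymp
      then have "eventually (\<lambda>t. t powr (2 - p) * s + t\<^sup>2 \<le> 0) (at_right 0)"
        by (rule eventually_mono) simp
      then show False
        by (rule homogeneous_ext_no_peak[OF F u S u0])
    qed
    then show ?thesis
      using that[OF S] 1 u0 by simp
  next
    case 2
    have "Sup (g ` sphere 0 1) \<le> 0"
      by (rule homogeneous_ext_Sup_le_0[OF u 2 g])
    with lower obtain s where S: "Sup (g ` sphere 0 1) = ereal s" and "s \<le> 0"
      by (cases "Sup (g ` sphere 0 1)") auto
    then consider "s = 0" | "s < 0"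
      by linarith
    then have "u0 \<le> ereal (r powr (2 - p) * s)" for r
    proof cases
      case 1
      then have "u0 \<le> 0"
        by (intro homogeneous_ext_center_nonpos[OF F u S]) simp
      with 1 show ?thesis
        by (simp add: zero_ereal_def)
    next
      case 2
      then show ?thesis
        using homogeneous_ext_center_MInf[OF F u S] \<open>p > 2\<close> by simp
    qed
    then show ?thesis
      using that[OF S] \<open>s \<le> 0\<close> 2 by (simp add: mult_nonpos_nonpos)
  qed
qed

section \<open>The density \<open>\<Theta>\<close>\<close>

lemma powr_mult_right_mono:
  fixes t r k s :: real
  assumes "0 < t" "t \<le> r" "0 \<le> k * s"
  shows "t powr k * s \<le> r powr k * s"
proof -
  consider "k = 0" | "k > 0" "s \<ge> 0" | "k < 0" "s \<le> 0"
    using assms(3) by (cases "k = 0") (auto simp: zero_le_mult_iff)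
  then show ?thesis
  proof cases
    case 2
    then show ?thesis
      using assms by (intro mult_right_mono powr_mono2) auto
  next
    case 3
    then show ?thesis
      using assms by (intro mult_right_mono_neg powr_mono2') auto
  qed (use assms in simp)
qed

lemma max_fun_homogeneous_ext:
  fixes g :: "real^'n \<Rightarrow> ereal"
  assumes S: "Sup (g ` sphere 0 1) = ereal s" and mono: "0 \<le> (2 - p) * s"
    and r: "r > 0" and u0: "u0 \<le> ereal (r powr (2 - p) * s)"
  shows "max_fun (homogeneous_ext p u0 g) r = ereal (r powr (2 - p) * s)"
  unfolding max_fun_def
proof (rule antisym)
  show "Sup (homogeneous_ext p u0 g ` cball 0 r) \<le> ereal (r powr (2 - p) * s)"
  proof (rule SUP_least)
    fix y :: "real^'n" assume y: "y \<in> cball 0 r"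
    show "homogeneous_ext p u0 g y \<le> ereal (r powr (2 - p) * s)"
    proof (cases "y = 0")
      case True
      then show ?thesis
        using u0 by (simp add: homogeneous_ext_def)
    next
      case False
      have "norm y powr (2 - p) * s \<le> r powr (2 - p) * s"
        using False y mono by (intro powr_mult_right_mono) auto
      then show ?thesis
        by (intro order_trans[OF homogeneous_ext_le_Sup[OF S False]]) simp
    qed
  qed
next
  have "ereal (r powr (2 - p) * s) = ereal (r powr (2 - p)) * Sup (g ` sphere 0 1)"
    by (simp add: S)
  also have "\<dots> = (SUP \<sigma>\<in>sphere 0 1. ereal (r powr (2 - p)) * g \<sigma>)"
    by (rule Sup_ereal_mult_left') simp_all
  also have "\<dots> \<le> Sup (homogeneous_ext p u0 g ` cball 0 r)"
  proof (rule SUP_least)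
    fix \<sigma> :: "real^'n" assume \<sigma>: "\<sigma> \<in> sphere 0 1"
    then have "ereal (r powr (2 - p)) * g \<sigma> = homogeneous_ext p u0 g (r *\<^sub>R \<sigma>)"
      using r by (simp add: homogeneous_ext_ray)
    also have "\<dots> \<le> Sup (homogeneous_ext p u0 g ` cball 0 r)"
      using \<sigma> r by (intro SUP_upper) auto
    finally show "ereal (r powr (2 - p)) * g \<sigma> \<le> Sup (homogeneous_ext p u0 g ` cball 0 r)" .
  qed
  finally show "ereal (r powr (2 - p) * s) \<le> Sup (homogeneous_ext p u0 g ` cball 0 r)" .
qed

text \<open>When \<open>M(u, r) = r\<^sup>2\<^sup>-\<^sup>p s\<close>, the difference quotient defining \<open>\<Theta>\<close> is constant.\<close>
lemma theta_quot_tendsto: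
  assumes p: "p \<noteq> 2" and M: "\<And>r. r > 0 \<Longrightarrow> max_fun u r = ereal (r powr (2 - p) * s)"
  shows "(theta_quot p u \<longlongrightarrow> ereal (if p < 2 then s else - s)) small_pairs"
proof (rule tendsto_eventually)
  have "theta_quot p u (r, t) = ereal (if p < 2 then s else - s)" if "0 < r" "r < t" for r t
  proof (cases "p < 2")
    case True
    then have "r powr (2 - p) < t powr (2 - p)"
      using that by (intro powr_less_mono2) auto
    then show ?thesis
      using True that M unfolding theta_quot_def riesz_kernel_def
      by (simp add: left_diff_distrib[symmetric])
  next
    case False
    then have "t powr (2 - p) < r powr (2 - p)"
      using p that by (intro powr_less_mono2_neg) auto
    then show ?thesis
      using False that M unfolding theta_quot_def riesz_kernel_def
      by (simp add: left_diff_distrib[symmetric] field_simps)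
  qed
  then show "eventually (\<lambda>x. theta_quot p u x = ereal (if p < 2 then s else - s)) small_pairs"
    unfolding small_pairs_def eventually_at_filter by (auto intro: always_eventually)
qed

theorem proposition5p6:
  fixes F :: "(real^'n^'n) set" and G :: "(real^'n^'n) set"
    and p :: real and g :: "real^'n \<Rightarrow> ereal" and u0 :: ereal
  assumes "cone_subequation F"
    and "transitive_orth_subgroup G" and "invariant_under G F"
    and "1 \<le> p" and "p \<noteq> 2"
    and "\<forall>e::real^'n. norm e = 1 \<longrightarrow> riesz_char F e = ereal p"
    and "\<forall>\<sigma>\<in>sphere 0 1. g \<sigma> < \<infinity>"
    and "F_subharmonic F (\<lambda>x. if x = 0 then u0
                              else ereal (norm x powr (2 - p)) * g (inverse (norm x) *\<^sub>R x))"
  shows "F_sphere_subharmonic F p g \<and>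
         ((\<exists>\<sigma>\<in>sphere 0 1. g \<sigma> \<noteq> -\<infinity>) \<longrightarrow>
           (\<exists>\<Theta>. (theta_quot p (\<lambda>x. if x = 0 then u0
                              else ereal (norm x powr (2 - p)) * g (inverse (norm x) *\<^sub>R x))
                     \<longlongrightarrow> \<Theta>) small_pairs \<and>
               (2 < p \<longrightarrow> Sup (g ` sphere 0 1) = - \<Theta> \<and> - \<Theta> \<le> 0) \<and>
               (p < 2 \<longrightarrow> Sup (g ` sphere 0 1) = \<Theta> \<and> \<Theta> \<ge> 0)))"
proof -
  have u_eq: "(\<lambda>x. if x = 0 then u0 else ereal (norm x powr (2 - p)) * g (inverse (norm x) *\<^sub>R x))
      = homogeneous_ext p u0 g"
    by (simp add: fun_eq_iff homogeneous_ext_def sgn_div_norm)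
  note u = assms(8)[unfolded u_eq]
  have "\<exists>\<Theta>. (theta_quot p (homogeneous_ext p u0 g) \<longlongrightarrow> \<Theta>) small_pairs \<and>
          (2 < p \<longrightarrow> Sup (g ` sphere 0 1) = - \<Theta> \<and> - \<Theta> \<le> 0) \<and>
          (p < 2 \<longrightarrow> Sup (g ` sphere 0 1) = \<Theta> \<and> \<Theta> \<ge> 0)"
    if "\<exists>\<sigma>\<in>sphere 0 1. g \<sigma> \<noteq> -\<infinity>"
  proof -
    from that obtain \<sigma>0 where "\<sigma>0 \<in> sphere 0 1" "g \<sigma>0 \<noteq> -\<infinity>"
      by blast
    with assms(7) obtain c0 where \<sigma>0: "\<sigma>0 \<in> sphere 0 1" "g \<sigma>0 = ereal c0"
      by (cases "g \<sigma>0") auto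
    obtain s where S: "Sup (g ` sphere 0 1) = ereal s" and sign: "0 \<le> (2 - p) * s"
      and center: "\<And>r. r > 0 \<Longrightarrow> u0 \<le> ereal (r powr (2 - p) * s)"
      using homogeneous_ext_Sup_and_center[OF assms(1) u _ assms(5,7) \<sigma>0] assms(4) by auto
    have "(theta_quot p (homogeneous_ext p u0 g) \<longlongrightarrow> ereal (if p < 2 then s else - s)) small_pairs"
      by (intro theta_quot_tendsto assms(5) max_fun_homogeneous_ext[OF S sign] center)
    then show ?thesis
      using S sign by (intro exI[of _ "ereal (if p < 2 then s else - s)"]) (auto simp: zero_le_mult_iff)
  qed
  then show ?thesis
    unfolding u_eq using F_sphere_subharmonic_of_homogeneous_ext[OF u assms(7)] by blast
qed

end
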